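(* Let $\mathbf{L}$ be a distributive lattice, $n\ge1$ an integer and $F$ an upset of $\mathbf{L}$. The following are equivalent: (i) $F$ is an $n$-prime filter; (ii) $F$ is a filter and $F$ is an intersection of at most $n$ prime upsets; (iii) $F$ is an intersection of at most $n$ prime filters; (iv) there is a lattice homomorphism $h\colon\mathbf{L}\to\mathbf{2}^n$ with $F=h^{-1}[\{1\}]$, where $\mathbf{2}^n$ is the Boolean lattice with $n$ atoms and $1$ its top element.
   Context: A filter on a lattice is an upset closed under binary meets (the empty set and the whole lattice count). An upset $F$ is prime if $a\vee b\in F$ implies $a\in F$ or $b\in F$; a prime filter is a filter which is a prime upset. A filter $F$ is $n$-prime if for all $x_1,\dots,x_{n+1}$: $x_1\vee\dots\vee x_{n+1}\in F$ implies $\bigvee_{j\neq i}x_j\in F$ for some $i\in\{1,\dots,n+1\}$. An intersection of zero sets is the whole lattice. Lattice homomorphisms need not preserve bounds. *)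

theory Defs
  imports Main
begin

definition upset :: "'a::lattice set \<Rightarrow> bool" where
  "upset F \<longleftrightarrow> (\<forall>x y. x \<in> F \<longrightarrow> x \<le> y \<longrightarrow> y \<in> F)"

definition lfilter :: "'a::lattice set \<Rightarrow> bool" where
  "lfilter F \<longleftrightarrow> upset F \<and> (\<forall>x y. x \<in> F \<longrightarrow> y \<in> F \<longrightarrow> inf x y \<in> F)"

definition prime_upset :: "'a::lattice set \<Rightarrow> bool" where
  "prime_upset F \<longleftrightarrow> upset F \<and> (\<forall>a b. sup a b \<in> F \<longrightarrow> a \<in> F \<or> b \<in> F)"

definition prime_filter :: "'a::lattice set \<Rightarrow> bool" where
  "prime_filter F \<longleftrightarrow> lfilter F \<and> prime_upset F"

text \<open>n-prime filter: for x_0,...,x_n (n+1 elements), if their join is in F then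
  the join of all but one of them is in F. Finite joins are Sup_fin (n >= 1 so the sets are nonempty).\<close>
definition n_prime_filter :: "nat \<Rightarrow> 'a::lattice set \<Rightarrow> bool" where
  "n_prime_filter n F \<longleftrightarrow> lfilter F \<and>
     (\<forall>x :: nat \<Rightarrow> 'a. Sup_fin (x ` {..n}) \<in> F \<longrightarrow>
        (\<exists>i\<le>n. Sup_fin (x ` ({..n} - {i})) \<in> F))"

text \<open>The Boolean lattice 2^n with n atoms is modelled as the powerset of {..<n},
  ordered by inclusion; its top element is {..<n}.\<close>
definition hom_to_2n :: "nat \<Rightarrow> ('a::lattice \<Rightarrow> nat set) \<Rightarrow> bool" where
  "hom_to_2n n h \<longleftrightarrow> (\<forall>x. h x \<subseteq> {..<n}) \<and>
     (\<forall>x y. h (sup x y) = h x \<union> h y) \<and> (\<forall>x y. h (inf x y) = h x \<inter> h y)"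

end

theory Submission
  imports Defs
begin

text \<open>
  (iii) gives (ii) trivially, and (ii) gives (i) by pigeonhole: each of the at most \<open>n\<close> prime
  upsets containing \<open>x\<^sub>0 \<squnion> \<dots> \<squnion> x\<^sub>n\<close> contains some \<open>x\<^sub>i\<close>, so some index is chosen by none of them
  and may be dropped. (iii) and (iv) are two descriptions of the same data: \<open>n\<close> prime filters,
  padded with the whole lattice, are the preimages of the \<open>n\<close> coordinates of a homomorphism into
  \<open>2\<^sup>n\<close>. For (i) \<Rightarrow> (iii) call a finite family \<open>t\<^sub>i\<close> (\<open>i \<in> I\<close>) independent if its join lies
  in \<open>F\<close> but no join of all members but one does. An \<open>n\<close>-prime filter has no independent family of
  \<open>n + 1\<close> members, so take one of maximal size \<open>k \<le> n\<close>. The sets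
  \<open>P\<^sub>i = {y. y \<squnion> \<Squnion>\<^sub>j\<^sub>\<noteq>\<^sub>i t\<^sub>j \<in> F}\<close> are filters containing \<open>F\<close>; by distributivity, a failure of primality
  of some \<open>P\<^sub>i\<close>, or an element of \<open>\<Inter>\<^sub>i P\<^sub>i\<close> outside \<open>F\<close>, would yield an independent family of size
  \<open>k + 1\<close>. Hence \<open>F = \<Inter>\<^sub>i P\<^sub>i\<close> is an intersection of \<open>k\<close> prime filters.
\<close>

lemma upsetD: "upset F \<Longrightarrow> x \<in> F \<Longrightarrow> x \<le> y \<Longrightarrow> y \<in> F"
  unfolding upset_def by blast

lemma lfilter_upset: "lfilter F \<Longrightarrow> upset F"
  unfolding lfilter_def by blast

lemma lfilter_infI: "lfilter F \<Longrightarrow> x \<in> F \<Longrightarrow> y \<in> F \<Longrightarrow> inf x y \<in> F"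
  unfolding lfilter_def by blast

lemma lfilter_Inter: "(\<And>P. P \<in> G \<Longrightarrow> lfilter P) \<Longrightarrow> lfilter (\<Inter>G)"
  unfolding lfilter_def upset_def by blast

lemma prime_filter_UNIV: "prime_filter UNIV"
  unfolding prime_filter_def lfilter_def prime_upset_def upset_def by simp

lemma prime_filter_sup_iff: "prime_filter P \<Longrightarrow> sup x y \<in> P \<longleftrightarrow> x \<in> P \<or> y \<in> P"
  unfolding prime_filter_def prime_upset_def upset_def by (meson sup.cobounded1 sup.cobounded2)

lemma prime_filter_inf_iff: "prime_filter P \<Longrightarrow> inf x y \<in> P \<longleftrightarrow> x \<in> P \<and> y \<in> P"
  unfolding prime_filter_def lfilter_def upset_def by (meson inf.cobounded1 inf.cobounded2)

lemma prime_upset_Sup_finD: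
  assumes "prime_upset P" "finite A" "A \<noteq> {}" "Sup_fin A \<in> P"
  shows "\<exists>a\<in>A. a \<in> P"
  using assms(2-4)
proof (induction rule: finite_ne_induct)
  case (insert x B)
  then show ?case using assms(1) unfolding prime_upset_def by auto
qed simp

lemma lfilter_Inf_fin:
  assumes "lfilter F" "finite A" "A \<noteq> {}" "A \<subseteq> F"
  shows "Inf_fin A \<in> F"
  using assms(2-4)
proof (induction rule: finite_ne_induct)
  case (insert x B)
  then show ?case using lfilter_infI[OF assms(1)] by simp
qed simp

lemma n_prime_filter_if_Inter_prime_upsets:
  assumes F: "lfilter F" and G: "finite G" "card G \<le> n" "\<forall>P\<in>G. prime_upset P" "F = \<Inter>G"
  shows "n_prime_filter n F"
  unfolding n_prime_filter_def
proof (intro conjI allI impI F)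
  fix x :: "nat \<Rightarrow> 'a"
  assume "Sup_fin (x ` {..n}) \<in> F"
  then have "\<exists>i\<le>n. x i \<in> P" if "P \<in> G" for P
    using that G prime_upset_Sup_finD[of P "x ` {..n}"] by auto
  then obtain choice where choice: "\<And>P. P \<in> G \<Longrightarrow> choice P \<le> n \<and> x (choice P) \<in> P"
    by metis
  have "card (choice ` G) < card {..n}"
    using card_image_le[OF G(1), of choice] G(2) by simp
  then have "\<not> {..n} \<subseteq> choice ` G"
    using card_mono[OF G(1)[THEN finite_imageI]] by fastforce
  then obtain i where i: "i \<le> n" "i \<notin> choice ` G" by auto
  have "Sup_fin (x ` ({..n} - {i})) \<in> P" if P: "P \<in> G" for P
  proof -
    have "x (choice P) \<le> Sup_fin (x ` ({..n} - {i}))"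
      using choice[OF P] i P by (intro Sup_fin.coboundedI) auto
    then show ?thesis
      using choice[OF P] G(3) P upsetD unfolding prime_upset_def by blast
  qed
  then show "\<exists>i\<le>n. Sup_fin (x ` ({..n} - {i})) \<in> F" using i G(4) by auto
qed

subsection \<open>Homomorphisms into \<open>2\<^sup>n\<close>\<close>

lemma Inter_eq_INT_padded:
  assumes "finite G" "card G \<le> n"
  obtains P where "\<forall>i<n. P i \<in> insert UNIV G" "\<Inter>G = (\<Inter>i<n. P i)"
proof -
  obtain f where f: "bij_betw f {..<card G} G"
    using ex_bij_betw_nat_finite[OF assms(1)] by (auto simp: atLeast0LessThan)
  define P where "P i = (if i < card G then f i else UNIV)" for i
  have "\<forall>i<n. P i \<in> insert UNIV G"
    using bij_betwE[OF f] unfolding P_def by simp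
  moreover have "\<Inter>G = (\<Inter>i<card G. f i)"
    using bij_betw_imp_surj_on[OF f] by simp
  moreover have "(\<Inter>i<card G. f i) = (\<Inter>i<n. P i)"
  proof (rule equalityI)
    show "(\<Inter>i<n. P i) \<subseteq> (\<Inter>i<card G. f i)"
    proof (rule INT_greatest)
      fix i assume "i \<in> {..<card G}"
      then have "i \<in> {..<n}" "P i = f i" using assms(2) unfolding P_def by auto
      then show "(\<Inter>i<n. P i) \<subseteq> f i" by (metis INT_lower)
    qed
  qed (auto simp: P_def)
  ultimately show thesis using that by simp
qed

lemma hom_to_2n_if_Inter_prime_filters:
  assumes "finite G" "card G \<le> n" "\<forall>P\<in>G. prime_filter P"
  shows "\<exists>h. hom_to_2n n h \<and> \<Inter>G = {x. h x = {..<n}}"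
proof -
  obtain P where P: "\<forall>i<n. P i \<in> insert UNIV G" "\<Inter>G = (\<Inter>i<n. P i)"
    using Inter_eq_INT_padded[OF assms(1,2)] .
  have prime: "prime_filter (P i)" if "i < n" for i
    using P(1) that assms(3) prime_filter_UNIV by (metis insertE)
  define h where "h x = {i. i < n \<and> x \<in> P i}" for x
  have hom: "hom_to_2n n h"
    unfolding hom_to_2n_def
  proof (intro conjI allI)
    fix x y
    show "h x \<subseteq> {..<n}" by (auto simp: h_def)
    show "h (sup x y) = h x \<union> h y" by (auto simp: h_def prime_filter_sup_iff[OF prime])
    show "h (inf x y) = h x \<inter> h y" by (auto simp: h_def prime_filter_inf_iff[OF prime])
  qed
  have "x \<in> \<Inter>G \<longleftrightarrow> h x = {..<n}" for x
    unfolding P(2) h_def by (auto simp: set_eq_iff)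
  then have "\<Inter>G = {x. h x = {..<n}}" by blast
  with hom show ?thesis by blast
qed

lemma Inter_prime_filters_if_hom_to_2n:
  assumes "hom_to_2n n h"
  shows "\<exists>G. finite G \<and> card G \<le> n \<and> (\<forall>P\<in>G. prime_filter P) \<and> {x. h x = {..<n}} = \<Inter>G"
proof -
  have h: "h (sup x y) = h x \<union> h y" "h (inf x y) = h x \<inter> h y" "h x \<subseteq> {..<n}" for x y
    using assms unfolding hom_to_2n_def by auto
  have mono: "i \<in> h y" if "x \<le> y" "i \<in> h x" for i x y
    using h(1)[of x y] that by (metis UnCI sup.absorb2)
  define P where "P i = {x. i \<in> h x}" for i
  have "prime_filter (P i)" for i
    unfolding prime_filter_def prime_upset_def lfilter_def upset_def P_def
    using mono by (simp add: h(1,2))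
  moreover have "{x. h x = {..<n}} = \<Inter>(P ` {..<n})"
    unfolding P_def using h(3) by auto
  moreover have "card (P ` {..<n}) \<le> n"
    using card_image_le[of "{..<n}" P] by simp
  ultimately show ?thesis by blast
qed

subsection \<open>Finite joins\<close>

lemma Sup_fin_insert_mono:
  fixes y z :: "'a::lattice"
  shows "finite A \<Longrightarrow> y \<le> z \<Longrightarrow> Sup_fin (insert y A) \<le> Sup_fin (insert z A)"
  by (cases "A = {}") (simp_all add: le_supI1)

lemma Sup_fin_insert_inf:
  fixes y z :: "'a::distrib_lattice"
  shows "finite A \<Longrightarrow> Sup_fin (insert (inf y z) A) = inf (Sup_fin (insert y A)) (Sup_fin (insert z A))"
  by (cases "A = {}") (simp_all add: sup_inf_distrib2)

lemma Sup_fin_insert_sup: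
  fixes y z :: "'a::lattice"
  shows "finite A \<Longrightarrow> Sup_fin (insert (sup y z) A) = Sup_fin (insert y (insert z A))"
  by (cases "A = {}") (simp_all add: sup_assoc)

lemma Sup_fin_split_image:
  fixes t :: "nat \<Rightarrow> 'a::distrib_lattice"
  assumes fin: "finite I" and i: "i \<in> I" and j: "j \<notin> I"
  shows "Sup_fin (t(i := inf (t i) y, j := inf (t i) z) ` insert j I)
    = inf (Sup_fin (t ` I)) (Sup_fin (insert (sup y z) (t ` (I - {i}))))"
proof -
  define A where "A = t ` (I - {i})"
  define t' where "t' = t(i := inf (t i) y, j := inf (t i) z)"
  have fA: "finite A" unfolding A_def using fin by simp
  have "t' ` (I - {i}) = A" unfolding A_def t'_def using j by (intro image_cong) auto
  moreover have "insert j I = insert j (insert i (I - {i}))" using i by blast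
  moreover have "t' i = inf (t i) y" "t' j = inf (t i) z" unfolding t'_def using i j by auto
  ultimately have "Sup_fin (t' ` insert j I) = Sup_fin (insert (inf (t i) z) (insert (inf (t i) y) A))"
    by (simp only: image_insert)
  also have "\<dots> = Sup_fin (insert (inf (t i) (sup y z)) A)"
    by (simp only: Sup_fin_insert_sup[OF fA, symmetric] inf_sup_distrib1 sup_commute)
  also have "\<dots> = inf (Sup_fin (insert (t i) A)) (Sup_fin (insert (sup y z) A))"
    using fA by (rule Sup_fin_insert_inf)
  also have "insert (t i) A = t ` I" unfolding A_def using i by blast
  finally show ?thesis unfolding t'_def A_def .
qed

lemma Sup_fin_meet_image:
  fixes t :: "nat \<Rightarrow> 'a::distrib_lattice"
  assumes fin: "finite I" and ne: "I \<noteq> {}" and j: "j \<notin> I"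
  shows "Sup_fin (((\<lambda>m. inf z (t m))(j := S)) ` insert j I) = sup S (inf z (Sup_fin (t ` I)))"
proof -
  define t' where "t' = (\<lambda>m. inf z (t m))(j := S)"
  have "t' ` I = (\<lambda>m. inf z (t m)) ` I" unfolding t'_def using j by (intro image_cong) auto
  moreover have "t' j = S" unfolding t'_def by simp
  ultimately have "Sup_fin (t' ` insert j I) = sup S (Sup_fin ((\<lambda>m. inf z (t m)) ` I))"
    using fin ne by (simp add: Sup_fin.insert)
  also have "Sup_fin ((\<lambda>m. inf z (t m)) ` I) = inf z (Sup_fin (t ` I))"
    using fin ne by (simp add: Sup_fin.hom_commute[where h = "inf z"] inf_sup_distrib1 image_image)
  finally show ?thesis unfolding t'_def .
qed

definition join_preimage :: "'a::lattice set \<Rightarrow> 'a set \<Rightarrow> 'a set" where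
  "join_preimage F A = {y. Sup_fin (insert y A) \<in> F}"

lemma lfilter_join_preimage:
  fixes F :: "'a::distrib_lattice set"
  assumes "lfilter F" "finite A"
  shows "lfilter (join_preimage F A)"
  unfolding lfilter_def upset_def join_preimage_def
proof (intro conjI allI impI; simp only: mem_Collect_eq)
  fix x y
  show "Sup_fin (insert y A) \<in> F" if "Sup_fin (insert x A) \<in> F" "x \<le> y"
    using that Sup_fin_insert_mono[OF assms(2)] upsetD[OF lfilter_upset[OF assms(1)]] by blast
  show "Sup_fin (insert (inf x y) A) \<in> F" if "Sup_fin (insert x A) \<in> F" "Sup_fin (insert y A) \<in> F"
    using that lfilter_infI[OF assms(1)] by (simp add: Sup_fin_insert_inf[OF assms(2)])
qed

lemma subset_join_preimage:
  assumes "upset F" "finite A"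
  shows "F \<subseteq> join_preimage F A"
proof
  fix x assume x: "x \<in> F"
  have "x \<le> Sup_fin (insert x A)" using assms(2) by (intro Sup_fin.coboundedI) auto
  then show "x \<in> join_preimage F A"
    using x upsetD[OF assms(1)] unfolding join_preimage_def by blast
qed

lemma lfilter_sup_Inf_fin_inf:
  fixes F :: "'a::distrib_lattice set"
  assumes F: "lfilter F" and B: "finite B" "B \<noteq> {}" and zB: "\<forall>b\<in>B. sup z b \<in> F" and T: "T \<in> F"
  shows "sup (Inf_fin B) (inf z T) \<in> F"
proof -
  have "sup z (Inf_fin B) \<in> F"
    using lfilter_Inf_fin[OF F, of "sup z ` B"] B zB
    by (simp add: Inf_fin.hom_commute[where h = "sup z"] sup_inf_distrib1 image_subset_iff)
  then have "inf (sup z (Inf_fin B)) T \<in> F" using T by (rule lfilter_infI[OF F])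
  moreover have "inf (sup z (Inf_fin B)) T \<le> sup (Inf_fin B) (inf z T)"
    by (simp add: sup_inf_distrib1 le_infI1 le_infI2 sup_commute)
  ultimately show ?thesis using upsetD[OF lfilter_upset[OF F]] by blast
qed

subsection \<open>Independent families\<close>

text \<open>The witness \<open>y\<close> stands in for the join of the other members, which does not exist
  (\<open>Sup_fin {}\<close> is arbitrary) for a one-member family.\<close>

definition independent_family :: "'a::lattice set \<Rightarrow> nat set \<Rightarrow> (nat \<Rightarrow> 'a) \<Rightarrow> bool" where
  "independent_family F I t \<longleftrightarrow> finite I \<and> I \<noteq> {} \<and> Sup_fin (t ` I) \<in> F \<and>
     (\<forall>i\<in>I. \<exists>y. y \<notin> F \<and> (\<forall>j\<in>I - {i}. t j \<le> y))"

lemma independent_family_Sup_fin_Diff_notin: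
  assumes "upset F" "independent_family F I t" "i \<in> I" "I - {i} \<noteq> {}"
  shows "Sup_fin (t ` (I - {i})) \<notin> F"
proof
  obtain y where y: "y \<notin> F" "\<forall>j\<in>I - {i}. t j \<le> y"
    using assms(2,3) unfolding independent_family_def by blast
  have "Sup_fin (t ` (I - {i})) \<le> y"
    using assms(2,4) y(2) unfolding independent_family_def by (intro Sup_fin.boundedI) auto
  moreover assume "Sup_fin (t ` (I - {i})) \<in> F"
  ultimately show False using y(1) upsetD[OF assms(1)] by blast
qed

lemma independent_family_card_neq:
  assumes n: "n \<ge> 1" and F: "n_prime_filter n F" and ind: "independent_family F I t"
  shows "card I \<noteq> Suc n"
proof
  assume card: "card I = Suc n"
  obtain g where g: "bij_betw g {..n} I"
    using ex_bij_betw_nat_finite[of I] ind card unfolding independent_family_def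
    by (auto simp: atLeast0LessThan lessThan_Suc_atMost)
  have "(t \<circ> g) ` {..n} = t ` I"
    using bij_betw_imp_surj_on[OF g] by (metis image_comp)
  then have "Sup_fin ((t \<circ> g) ` {..n}) \<in> F"
    using ind unfolding independent_family_def by simp
  then obtain i where i: "i \<le> n" "Sup_fin ((t \<circ> g) ` ({..n} - {i})) \<in> F"
    using F unfolding n_prime_filter_def by blast
  have "g ` ({..n} - {i}) = I - {g i}"
    using g i(1) unfolding bij_betw_def by (subst inj_on_image_set_diff[of g "{..n}"]) auto
  then have image: "(t \<circ> g) ` ({..n} - {i}) = t ` (I - {g i})"
    by (metis image_comp)
  have gi: "g i \<in> I" using bij_betwE[OF g] i(1) by simp
  then have "card (I - {g i}) = n" using card by (simp add: card.infinite)
  then have "I - {g i} \<noteq> {}" using n by (intro notI) simp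
  moreover have "upset F" using F unfolding n_prime_filter_def lfilter_def by simp
  ultimately have "Sup_fin (t ` (I - {g i})) \<notin> F"
    using independent_family_Sup_fin_Diff_notin[OF _ ind gi] by blast
  then show False using i(2) image by simp
qed

lemma ex_maximal_independent_family:
  assumes n: "n \<ge> 1" and F: "n_prime_filter n F" and a: "a \<in> F" and b: "b \<notin> F"
  obtains I t where "independent_family F I t" "card I \<le> n"
    "\<And>I' t'. independent_family F I' t' \<Longrightarrow> card I' \<noteq> Suc (card I)"
proof -
  define M where "M = {card I |I t. independent_family F I t \<and> card I \<le> n}"
  have "independent_family F {0} (\<lambda>_. a)"
    using a b unfolding independent_family_def by auto
  then have "1 \<in> M" using n unfolding M_def by force
  moreover have M: "M \<subseteq> {..n}" unfolding M_def by auto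
  ultimately have "Max M \<in> M" by (intro Max_in) (auto intro: finite_subset)
  then obtain I t where ind: "independent_family F I t" "card I \<le> n" "card I = Max M"
    unfolding M_def by auto
  have "card I' \<noteq> Suc (card I)" if ind': "independent_family F I' t'" for I' t'
  proof
    assume card: "card I' = Suc (card I)"
    then have "card I' \<le> n"
      using ind(2) independent_family_card_neq[OF n F ind'] by linarith
    then have "card I' \<in> M" unfolding M_def using ind' by blast
    then have "card I' \<le> Max M" using M by (intro Max_ge) (auto intro: finite_subset)
    then show False using card ind(3) by simp
  qed
  then show thesis using that ind(1,2) by blast
qed

lemma split_independent_family:
  fixes F :: "'a::distrib_lattice set"
  assumes F: "lfilter F" and ind: "independent_family F I t" and i: "i \<in> I"
    and yz: "sup y z \<in> join_preimage F (t ` (I - {i}))"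
    and y: "y \<notin> join_preimage F (t ` (I - {i}))" and z: "z \<notin> join_preimage F (t ` (I - {i}))"
  shows "\<exists>I' t'. independent_family F I' t' \<and> card I' = Suc (card I)"
proof -
  define A where "A = t ` (I - {i})"
  have fin: "finite I" using ind unfolding independent_family_def by simp
  then have fA: "finite A" unfolding A_def by simp
  obtain j where j: "j \<notin> I" using ex_new_if_finite[OF infinite_UNIV_nat fin] by blast
  define t' where "t' = t(i := inf (t i) y, j := inf (t i) z)"
  have t'i: "t' i = inf (t i) y" and t'j: "t' j = inf (t i) z" and t'l: "\<And>l. l \<in> I - {i} \<Longrightarrow> t' l = t l"
    using i j unfolding t'_def by auto
  have join: "Sup_fin (t' ` insert j I) \<in> F"
    using ind yz unfolding t'_def Sup_fin_split_image[OF fin i j] independent_family_def join_preimage_def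
    by (simp add: lfilter_infI[OF F])
  have upper: "a \<le> Sup_fin (insert x A)" if "a \<in> insert x A" for a x
    using fA that by (intro Sup_fin.coboundedI) auto
  have "\<exists>u. u \<notin> F \<and> (\<forall>l\<in>insert j I - {m}. t' l \<le> u)" if m: "m \<in> insert j I" for m
  proof -
    consider "m = j" | "m = i" | "m \<in> I - {i}" using m by blast
    then show ?thesis
    proof cases
      case 1
      have "t' l \<le> Sup_fin (insert y A)" if "l \<in> insert j I - {m}" for l
      proof (cases "l = i")
        case True then show ?thesis using t'i le_infI2[OF upper[of y y]] by simp
      next
        case False then show ?thesis using that 1 t'l upper unfolding A_def by auto
      qed
      then show ?thesis using y unfolding join_preimage_def A_def by blast
    next
      case 2
      have "t' l \<le> Sup_fin (insert z A)" if "l \<in> insert j I - {m}" for l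
      proof (cases "l = j")
        case True then show ?thesis using t'j le_infI2[OF upper[of z z]] by simp
      next
        case False then show ?thesis using that 2 t'l upper unfolding A_def by auto
      qed
      then show ?thesis using z unfolding join_preimage_def A_def by blast
    next
      case 3
      then obtain u where u: "u \<notin> F" "\<forall>l\<in>I - {m}. t l \<le> u"
        using ind unfolding independent_family_def by blast
      have ti: "t i \<le> u" using u 3 i by blast
      have "t' l \<le> u" if "l \<in> insert j I - {m}" for l
        using that u t'i t'j t'l le_infI1[OF ti] by (cases "l = i \<or> l = j") auto
      then show ?thesis using u by blast
    qed
  qed
  then have "independent_family F (insert j I) t'"
    using join fin unfolding independent_family_def by blast
  then show ?thesis using fin j by (intro exI[of _ "insert j I"] exI[of _ t']) simp
qed

lemma extend_independent_family:
  fixes F :: "'a::distrib_lattice set"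
  assumes F: "lfilter F" and ind: "independent_family F I t" and two: "2 \<le> card I"
    and z: "z \<notin> F" and zP: "\<forall>l\<in>I. z \<in> join_preimage F (t ` (I - {l}))"
  shows "\<exists>I' t'. independent_family F I' t' \<and> card I' = Suc (card I)"
proof -
  have fin: "finite I" and ne: "I \<noteq> {}" using ind unfolding independent_family_def by auto
  have ne': "I - {l} \<noteq> {}" for l
  proof
    assume "I - {l} = {}"
    then have "card I \<le> card {l}" by (intro card_mono) auto
    then show False using two by simp
  qed
  define s where "s l = Sup_fin (t ` (I - {l}))" for l
  define S where "S = Inf_fin (s ` I)"
  have "sup z (s l) \<in> F" if "l \<in> I" for l
  proof -
    have "Sup_fin (insert z (t ` (I - {l}))) = sup z (s l)"
      using fin ne'[of l] unfolding s_def by (intro Sup_fin.insert) auto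
    then show ?thesis using zP[rule_format, OF that] unfolding join_preimage_def by simp
  qed
  then have "sup S (inf z (Sup_fin (t ` I))) \<in> F"
    using ind fin ne unfolding S_def independent_family_def
    by (intro lfilter_sup_Inf_fin_inf[OF F]) auto
  obtain j where j: "j \<notin> I" using ex_new_if_finite[OF infinite_UNIV_nat fin] by blast
  define t' where "t' = (\<lambda>m. inf z (t m))(j := S)"
  have join: "Sup_fin (t' ` insert j I) \<in> F"
    unfolding t'_def Sup_fin_meet_image[OF fin ne j] by fact
  have "\<exists>u. u \<notin> F \<and> (\<forall>l\<in>insert j I - {m}. t' l \<le> u)" if m: "m \<in> insert j I" for m
  proof (cases "m = j")
    case True
    then show ?thesis using z j unfolding t'_def by auto
  next
    case False
    then have "m \<in> I" using m by simp
    have "S \<le> s m" unfolding S_def using fin \<open>m \<in> I\<close> by (intro Inf_fin.coboundedI) auto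
    moreover have "t l \<le> s m" if "l \<in> I - {m}" for l
      unfolding s_def using fin that by (intro Sup_fin.coboundedI) auto
    ultimately have "\<forall>l\<in>insert j I - {m}. t' l \<le> s m"
      unfolding t'_def by (auto intro: le_infI2)
    moreover have "s m \<notin> F"
      using independent_family_Sup_fin_Diff_notin[OF lfilter_upset[OF F] ind \<open>m \<in> I\<close> ne']
      unfolding s_def .
    ultimately show ?thesis by blast
  qed
  then have "independent_family F (insert j I) t'"
    using join fin unfolding independent_family_def by blast
  then show ?thesis using fin j by (intro exI[of _ "insert j I"] exI[of _ t']) simp
qed

lemma prime_upset_join_preimage:
  fixes F :: "'a::distrib_lattice set"
  assumes F: "lfilter F" and ind: "independent_family F I t" and i: "i \<in> I"
    and max: "\<And>I' t'. independent_family F I' t' \<Longrightarrow> card I' \<noteq> Suc (card I)"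
  shows "prime_upset (join_preimage F (t ` (I - {i})))"
  unfolding prime_upset_def
proof (intro conjI allI impI)
  have "finite (t ` (I - {i}))" using ind unfolding independent_family_def by simp
  then show "upset (join_preimage F (t ` (I - {i})))"
    using lfilter_upset lfilter_join_preimage[OF F] by blast
  fix y z assume "sup y z \<in> join_preimage F (t ` (I - {i}))"
  then show "y \<in> join_preimage F (t ` (I - {i})) \<or> z \<in> join_preimage F (t ` (I - {i}))"
    using split_independent_family[OF F ind i] max by blast
qed

lemma Inter_join_preimage_subset:
  fixes F :: "'a::distrib_lattice set"
  assumes F: "lfilter F" and ind: "independent_family F I t"
    and max: "\<And>I' t'. independent_family F I' t' \<Longrightarrow> card I' \<noteq> Suc (card I)"
  shows "(\<Inter>i\<in>I. join_preimage F (t ` (I - {i}))) \<subseteq> F"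
proof
  fix z assume z: "z \<in> (\<Inter>i\<in>I. join_preimage F (t ` (I - {i})))"
  show "z \<in> F"
  proof (cases "2 \<le> card I")
    case True
    then show ?thesis using extend_independent_family[OF F ind True] z max by blast
  next
    case False
    moreover have "card I \<noteq> 0" using ind unfolding independent_family_def by simp
    ultimately obtain i where "I = {i}" by (metis One_nat_def card_1_singletonE less_2_cases not_less)
    then show ?thesis using z unfolding join_preimage_def by simp
  qed
qed

lemma Inter_prime_filters_if_n_prime_filter:
  fixes F :: "'a::distrib_lattice set"
  assumes n: "n \<ge> 1" and F: "n_prime_filter n F"
  shows "\<exists>G. finite G \<and> card G \<le> n \<and> (\<forall>P\<in>G. prime_filter P) \<and> F = \<Inter>G"
proof (cases "F = {}")
  case True
  have "prime_filter {}" unfolding prime_filter_def lfilter_def prime_upset_def upset_def by simp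
  then show ?thesis using True n by (intro exI[of _ "{{}}"]) simp
next
  case False
  then obtain a where a: "a \<in> F" by blast
  show ?thesis
  proof (cases "F = UNIV")
    case True
    then show ?thesis by (intro exI[of _ "{}"]) simp
  next
    case False
    then obtain b where b: "b \<notin> F" by blast
    have lf: "lfilter F" using F unfolding n_prime_filter_def by simp
    obtain I t where ind: "independent_family F I t" and card: "card I \<le> n"
      and max: "\<And>I' t'. independent_family F I' t' \<Longrightarrow> card I' \<noteq> Suc (card I)"
      using ex_maximal_independent_family[OF n F a b] by blast
    define P where "P i = join_preimage F (t ` (I - {i}))" for i
    have fin: "finite I" using ind unfolding independent_family_def by simp
    have "prime_filter (P i)" if "i \<in> I" for i
      unfolding prime_filter_def P_def
      using lfilter_join_preimage[OF lf] prime_upset_join_preimage[OF lf ind that max] fin by simp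
    moreover have "F = \<Inter>(P ` I)"
    proof
      show "F \<subseteq> \<Inter>(P ` I)"
        unfolding P_def using subset_join_preimage[OF lfilter_upset[OF lf]] fin
        by (simp add: INT_greatest)
      show "\<Inter>(P ` I) \<subseteq> F"
        unfolding P_def using Inter_join_preimage_subset[OF lf ind max] .
    qed
    moreover have "card (P ` I) \<le> n" using card_image_le[OF fin, of P] card by simp
    ultimately show ?thesis using fin by (intro exI[of _ "P ` I"]) blast
  qed
qed

theorem mainTheorem7:
  fixes F :: "'a::distrib_lattice set" and n :: nat
  assumes "n \<ge> 1" and "upset F"
  shows "(n_prime_filter n F
          \<longleftrightarrow> (lfilter F \<and> (\<exists>G. finite G \<and> card G \<le> n \<and> (\<forall>P\<in>G. prime_upset P) \<and> F = \<Inter>G)))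
       \<and> (n_prime_filter n F
          \<longleftrightarrow> (\<exists>G. finite G \<and> card G \<le> n \<and> (\<forall>P\<in>G. prime_filter P) \<and> F = \<Inter>G))
       \<and> (n_prime_filter n F
          \<longleftrightarrow> (\<exists>h. hom_to_2n n h \<and> F = {x. h x = {..<n}}))"
    (is "(?i \<longleftrightarrow> ?ii) \<and> (?i \<longleftrightarrow> ?iii) \<and> (?i \<longleftrightarrow> ?iv)")
proof -
  have i_iii: "?i \<Longrightarrow> ?iii"
    using Inter_prime_filters_if_n_prime_filter[OF assms(1)] .
  have iii_ii: "?iii \<Longrightarrow> ?ii"
    unfolding prime_filter_def using lfilter_Inter by blast
  have ii_i: "?ii \<Longrightarrow> ?i"
    using n_prime_filter_if_Inter_prime_upsets by blast
  have iii_iv: "?iii \<Longrightarrow> ?iv"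
    using hom_to_2n_if_Inter_prime_filters by blast
  have iv_iii: "?iv \<Longrightarrow> ?iii"
    using Inter_prime_filters_if_hom_to_2n by metis
  show ?thesis using i_iii iii_ii ii_i iii_iv iv_iii by blast
qed

end
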